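(* Let $W=(W_1,\dots,W_d)$ be a $d$-dimensional standard Wiener process, $t>0$ and $c\ge0$. Then $$E\Big[\exp\Big(c\sum_{i=1}^d\int_0^t\Big|\int_0^s\frac{1}{t-r}\,dW_i(r)\Big|\,ds\Big)\Big]\le\Big(e^{2c^2t}+2c\sqrt{2\pi t}\,e^{4c^2t}\Big)^{d/2}<\infty.$$ *)

theory Defs
  imports "HOL-Probability.Probability"
begin

definition wiener_process :: "'a measure \<Rightarrow> nat \<Rightarrow> (nat \<Rightarrow> real \<Rightarrow> 'a \<Rightarrow> real) \<Rightarrow> bool" where
  "wiener_process M d W \<longleftrightarrow>
     prob_space M \<and>
     (\<forall>i<d. \<forall>t\<ge>0. W i t \<in> borel_measurable M) \<and>
     (\<forall>i<d. \<forall>\<omega>\<in>space M. W i 0 \<omega> = 0 \<and> continuous_on {0..} (\<lambda>t. W i t \<omega>)) \<and>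
     (\<forall>(n::nat) (ts::nat \<Rightarrow> real). 0 \<le> ts 0 \<longrightarrow> (\<forall>k<n. ts k < ts (Suc k)) \<longrightarrow>
        prob_space.indep_vars M (\<lambda>_. borel)
          (\<lambda>(i, k) \<omega>. W i (ts (Suc k)) \<omega> - W i (ts k) \<omega>) ({..<d} \<times> {..<n}) \<and>
        (\<forall>i<d. \<forall>k<n. distributed M lborel (\<lambda>\<omega>. W i (ts (Suc k)) \<omega> - W i (ts k) \<omega>)
            (\<lambda>x. ennreal (normal_density 0 (sqrt (ts (Suc k) - ts k)) x))))"

text \<open>Wiener (Paley-Wiener-Zygmund) integral of a deterministic C^1 integrand f against a
real path B, defined pathwise by integration by parts:
  int_0^s f(r) dB(r) = f(s) B(s) - int_0^s f'(r) B(r) dr   (B(0) = 0).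
For a standard Wiener process it agrees a.s. with the Ito integral.\<close>
definition wiener_integral :: "(real \<Rightarrow> real) \<Rightarrow> (real \<Rightarrow> 'a \<Rightarrow> real) \<Rightarrow> real \<Rightarrow> 'a \<Rightarrow> real" where
  "wiener_integral f B s \<omega> = f s * B s \<omega> - integral {0..s} (\<lambda>r. deriv f r * B r \<omega>)"

end

theory Submission
  imports Defs
begin

text \<open>
Discretise [0, t] by the grid r_k = k t / N. The discrete Wiener sums
S_j = \<Sum>_{k<j} (W(r_{k+1}) - W(r_k)) / (t - r_k) are centred Gaussians whose variances satisfy
\<sigma>_j^2 \<le> r_j / (t (t - r_j)) by telescoping, so the Riemann sum \<Sum>_j (t/N) \<sigma>_j is at most
1 / sqrt t times the integral of sqrt (s / (t - s)) over [0, t], i.e. at most \<pi> sqrt t / 2.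
Convexity of exp, with weights proportional to (t/N) \<sigma>_j, reduces E exp (c \<Sum>_j (t/N) |S_j|)
to the one-dimensional bound E exp (l |Z|) \<le> exp (y^2/2) (1 + y sqrt (2/\<pi>)), y = l \<sigma>, for
Z ~ N(0, \<sigma>^2); no independence between the S_j is needed. The components of W are independent,
which gives the d-th power.

Pathwise, on each grid cell the increment of S_j differs from that of the Wiener integral of
1 / (t - r) by at most the oscillation of the path times 1 / (t - r_{j+1}) - 1 / (t - r_j), so by
uniform continuity S_j converges to the Wiener integral at every s < t. Fatou's lemma, first in s
and then in \<omega>, carries the bound over to the limit. Finally exp (y^2) (1 + y sqrt (2/\<pi>))^2 with
y = c \<pi> sqrt t / 2 is at most exp (2 c^2 t) + 2 c sqrt (2 \<pi> t) exp (4 c^2 t).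
\<close>

section \<open>Exponential moments of absolute values of Gaussians\<close>

lemma normal_density_le:
  assumes "\<sigma> > 0"
  shows "normal_density \<mu> \<sigma> x \<le> 1 / sqrt (2 * pi * \<sigma>\<^sup>2)"
  using assms by (simp add: normal_density_def divide_right_mono)

lemma normal_density_mult_exp:
  assumes "\<sigma> > 0"
  shows "normal_density 0 \<sigma> x * exp (l * x) = exp ((l * \<sigma>)\<^sup>2 / 2) * normal_density (l * \<sigma>\<^sup>2) \<sigma> x"
proof -
  have "-(x - 0)\<^sup>2 / (2 * \<sigma>\<^sup>2) + l * x = (l * \<sigma>)\<^sup>2 / 2 + -(x - l * \<sigma>\<^sup>2)\<^sup>2 / (2 * \<sigma>\<^sup>2)"
    using assms by (simp add: power2_eq_square field_simps)
  then show ?thesis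
    unfolding normal_density_def by (simp add: exp_add[symmetric])
qed

definition abs_normal_mgf_bound :: "real \<Rightarrow> real" where
  "abs_normal_mgf_bound y = exp (y\<^sup>2 / 2) * (1 + y * sqrt (2 / pi))"

lemma abs_normal_mgf_bound_nonneg: "y \<ge> 0 \<Longrightarrow> abs_normal_mgf_bound y \<ge> 0"
  by (simp add: abs_normal_mgf_bound_def)

lemma abs_normal_mgf_bound_mono: "0 \<le> x \<Longrightarrow> x \<le> y \<Longrightarrow> abs_normal_mgf_bound x \<le> abs_normal_mgf_bound y"
  unfolding abs_normal_mgf_bound_def
  by (intro mult_mono) (auto intro!: add_left_mono mult_right_mono power_mono)

\<comment> \<open>Outside [-m, m) the tilted density is a shifted Gaussian density; inside, it is
  at most the maximal value of a Gaussian density.\<close>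
lemma normal_density_mult_exp_abs_le:
  assumes \<sigma>: "\<sigma> > 0" and l: "l \<ge> 0" and m: "m = l * \<sigma>\<^sup>2"
  shows "normal_density 0 \<sigma> x * exp (l * \<bar>x\<bar>) \<le> exp ((l * \<sigma>)\<^sup>2 / 2) *
           (normal_density m \<sigma> x * indicator {m..} x + normal_density (-m) \<sigma> x * indicator {..<-m} x
            + 1 / sqrt (2 * pi * \<sigma>\<^sup>2) * indicator {-m..<m} x)"
proof -
  have "normal_density 0 \<sigma> x * exp (l * \<bar>x\<bar>)
      = exp ((l * \<sigma>)\<^sup>2 / 2) * normal_density (if x \<ge> 0 then m else -m) \<sigma> x"
    using normal_density_mult_exp[OF \<sigma>, of x l] normal_density_mult_exp[OF \<sigma>, of x "-l"] m by simp
  also have "\<dots> \<le> exp ((l * \<sigma>)\<^sup>2 / 2) *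
      (normal_density m \<sigma> x * indicator {m..} x + normal_density (-m) \<sigma> x * indicator {..<-m} x
       + 1 / sqrt (2 * pi * \<sigma>\<^sup>2) * indicator {-m..<m} x)"
    using normal_density_le[OF \<sigma>, of m x] normal_density_le[OF \<sigma>, of "-m" x] l m
    by (intro mult_left_mono) (auto simp: indicator_def)
  finally show ?thesis .
qed

lemma nn_integral_normal_density_tails:
  assumes "\<sigma> > 0"
  shows "(\<integral>\<^sup>+x. ennreal (normal_density m \<sigma> x) * indicator {m..} x \<partial>lborel)
           + (\<integral>\<^sup>+x. ennreal (normal_density (-m) \<sigma> x) * indicator {..<-m} x \<partial>lborel) = 1"
proof -
  have "(\<integral>\<^sup>+x. ennreal (normal_density m \<sigma> x) * indicator {m..} x \<partial>lborel)
      = (\<integral>\<^sup>+x. ennreal (normal_density 0 \<sigma> x) * indicator {0..} x \<partial>lborel)"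
    by (subst nn_integral_real_affine[where c=1 and t=m]) (auto simp: normal_density_def indicator_def)
  moreover have "(\<integral>\<^sup>+x. ennreal (normal_density (-m) \<sigma> x) * indicator {..<-m} x \<partial>lborel)
      = (\<integral>\<^sup>+x. ennreal (normal_density 0 \<sigma> x) * indicator {..<0} x \<partial>lborel)"
    by (subst nn_integral_real_affine[where c=1 and t="-m"]) (auto simp: normal_density_def indicator_def)
  ultimately have "(\<integral>\<^sup>+x. ennreal (normal_density m \<sigma> x) * indicator {m..} x \<partial>lborel)
      + (\<integral>\<^sup>+x. ennreal (normal_density (-m) \<sigma> x) * indicator {..<-m} x \<partial>lborel)
      = (\<integral>\<^sup>+x. ennreal (normal_density 0 \<sigma> x) * indicator {0..} x
           + ennreal (normal_density 0 \<sigma> x) * indicator {..<0} x \<partial>lborel)"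
    by (simp add: nn_integral_add)
  also have "\<dots> = (\<integral>\<^sup>+x. ennreal (normal_density 0 \<sigma> x) \<partial>lborel)"
    by (intro nn_integral_cong) (auto simp: indicator_def)
  also have "\<dots> = 1"
    using assms by (subst nn_integral_eq_integral) (auto simp: normal_density_nonneg)
  finally show ?thesis .
qed

lemma nn_integral_normal_exp_abs_le:
  assumes \<sigma>: "\<sigma> > 0" and l: "l \<ge> 0"
  shows "(\<integral>\<^sup>+x. ennreal (normal_density 0 \<sigma> x * exp (l * \<bar>x\<bar>)) \<partial>lborel)
           \<le> ennreal (abs_normal_mgf_bound (l * \<sigma>))"
proof -
  define E where "E = exp ((l * \<sigma>)\<^sup>2 / 2)"
  define m where "m = l * \<sigma>\<^sup>2"
  define p where "p = 1 / sqrt (2 * pi * \<sigma>\<^sup>2)"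
  have m: "m \<ge> 0" and p: "p \<ge> 0" using l by (simp_all add: m_def p_def)
  have "(\<integral>\<^sup>+x. ennreal (normal_density 0 \<sigma> x * exp (l * \<bar>x\<bar>)) \<partial>lborel)
      \<le> (\<integral>\<^sup>+x. ennreal E * (ennreal (normal_density m \<sigma> x) * indicator {m..} x
          + ennreal (normal_density (-m) \<sigma> x) * indicator {..<-m} x + ennreal p * indicator {-m..<m} x) \<partial>lborel)"
  proof (intro nn_integral_mono)
    fix x
    have "ennreal (normal_density 0 \<sigma> x * exp (l * \<bar>x\<bar>)) \<le> ennreal (E *
        (normal_density m \<sigma> x * indicator {m..} x + normal_density (-m) \<sigma> x * indicator {..<-m} x
         + p * indicator {-m..<m} x))"
      unfolding E_def p_def by (rule ennreal_leI[OF normal_density_mult_exp_abs_le[OF \<sigma> l m_def]])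
    also have "\<dots> = ennreal E * (ennreal (normal_density m \<sigma> x) * indicator {m..} x
        + ennreal (normal_density (-m) \<sigma> x) * indicator {..<-m} x + ennreal p * indicator {-m..<m} x)"
      using p by (simp add: E_def ennreal_mult normal_density_nonneg flip: ennreal_indicator)
    finally show "ennreal (normal_density 0 \<sigma> x * exp (l * \<bar>x\<bar>)) \<le> \<dots>" .
  qed
  also have "\<dots> = ennreal E * (1 + (\<integral>\<^sup>+x. ennreal p * indicator {-m..<m} x \<partial>lborel))"
    by (simp add: nn_integral_cmult nn_integral_add nn_integral_normal_density_tails[OF \<sigma>])
  also have "(\<integral>\<^sup>+x. ennreal p * indicator {-m..<m} x \<partial>lborel) = ennreal (2 * m * p)"
    using m p by (subst nn_integral_cmult_indicator) (auto simp: ennreal_mult[symmetric] mult.commute)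
  also have "1 + ennreal (2 * m * p) = ennreal (1 + 2 * m * p)"
    using m p by simp
  also have "ennreal E * \<dots> = ennreal (E * (1 + 2 * m * p))"
    using m p by (intro ennreal_mult[symmetric]) (auto simp: E_def)
  also have "E * (1 + 2 * m * p) = abs_normal_mgf_bound (l * \<sigma>)"
  proof -
    have "sqrt (2 * pi * \<sigma>\<^sup>2) = sqrt (2 * pi) * \<sigma>" "sqrt (2 / pi) = 2 / sqrt (2 * pi)"
      using \<sigma> by (simp_all add: real_sqrt_mult real_sqrt_divide field_simps)
    then show ?thesis
      using \<sigma> by (simp add: abs_normal_mgf_bound_def E_def m_def p_def power2_eq_square field_simps)
  qed
  finally show ?thesis .
qed

lemma nn_integral_exp_sum_le:
  fixes A :: "'j \<Rightarrow> 'a \<Rightarrow> real" and \<theta> :: "'j \<Rightarrow> real"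
  assumes J: "finite J" and \<theta>: "\<And>j. j \<in> J \<Longrightarrow> \<theta> j > 0" "(\<Sum>j\<in>J. \<theta> j) = 1"
    and A: "\<And>j. j \<in> J \<Longrightarrow> A j \<in> borel_measurable M"
    and bound: "\<And>j. j \<in> J \<Longrightarrow> (\<integral>\<^sup>+\<omega>. ennreal (exp (A j \<omega> / \<theta> j)) \<partial>M) \<le> ennreal b"
    and b: "b \<ge> 0"
  shows "(\<integral>\<^sup>+\<omega>. ennreal (exp (\<Sum>j\<in>J. A j \<omega>)) \<partial>M) \<le> ennreal b"
proof -
  have "J \<noteq> {}" using \<theta>(2) by auto
  have jensen: "exp (\<Sum>j\<in>J. A j \<omega>) \<le> (\<Sum>j\<in>J. \<theta> j * exp (A j \<omega> / \<theta> j))" for \<omega>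
  proof -
    have "(\<Sum>j\<in>J. A j \<omega>) = (\<Sum>j\<in>J. \<theta> j * (A j \<omega> / \<theta> j))"
      using \<theta>(1) by (intro sum.cong) (auto dest: less_imp_neq[symmetric])
    then show ?thesis
      using convex_on_sum[OF J \<open>J \<noteq> {}\<close> exp_convex \<theta>(2), of "\<lambda>j. A j \<omega> / \<theta> j"] \<theta>(1)
      by (simp add: less_imp_le)
  qed
  have "(\<integral>\<^sup>+\<omega>. ennreal (exp (\<Sum>j\<in>J. A j \<omega>)) \<partial>M)
      \<le> (\<integral>\<^sup>+\<omega>. (\<Sum>j\<in>J. ennreal (\<theta> j) * ennreal (exp (A j \<omega> / \<theta> j))) \<partial>M)"
    using \<theta>(1) by (intro nn_integral_mono order.trans[OF ennreal_leI[OF jensen]])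
      (simp add: sum_ennreal[symmetric] ennreal_mult less_imp_le)
  also have "\<dots> = (\<Sum>j\<in>J. ennreal (\<theta> j) * (\<integral>\<^sup>+\<omega>. ennreal (exp (A j \<omega> / \<theta> j)) \<partial>M))"
    using A by (subst nn_integral_sum) (auto intro!: sum.cong nn_integral_cmult)
  also have "\<dots> \<le> (\<Sum>j\<in>J. ennreal (\<theta> j) * ennreal b)"
    by (intro sum_mono mult_left_mono bound) auto
  also have "\<dots> = ennreal b"
    using \<theta> by (simp add: sum_distrib_right[symmetric] sum_ennreal less_imp_le)
  finally show ?thesis .
qed

\<comment> \<open>No independence is needed: convexity of exp, with weights proportional to w j * \<sigma> j,
  reduces the bound to the one-dimensional estimate for each X j.\<close>
lemma nn_integral_exp_weighted_sum_abs_normal_le: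
  fixes X :: "'j \<Rightarrow> 'a \<Rightarrow> real"
  assumes J: "finite J" "J \<noteq> {}" and c: "c \<ge> 0"
    and w: "\<And>j. j \<in> J \<Longrightarrow> w j > 0" and \<sigma>: "\<And>j. j \<in> J \<Longrightarrow> \<sigma> j > 0"
    and X: "\<And>j. j \<in> J \<Longrightarrow> distributed M lborel (X j) (\<lambda>x. ennreal (normal_density 0 (\<sigma> j) x))"
  shows "(\<integral>\<^sup>+\<omega>. ennreal (exp (c * (\<Sum>j\<in>J. w j * \<bar>X j \<omega>\<bar>))) \<partial>M)
           \<le> ennreal (abs_normal_mgf_bound (c * (\<Sum>j\<in>J. w j * \<sigma> j)))"
proof -
  define S where "S = (\<Sum>j\<in>J. w j * \<sigma> j)"
  have S: "S > 0" unfolding S_def using J w \<sigma> by (intro sum_pos) auto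
  define \<theta> where "\<theta> j = w j * \<sigma> j / S" for j
  have \<theta>: "\<theta> j > 0" if "j \<in> J" for j using w[OF that] \<sigma>[OF that] S by (simp add: \<theta>_def)
  have "(\<Sum>j\<in>J. \<theta> j) = 1" using S by (simp add: \<theta>_def S_def sum_divide_distrib[symmetric])
  moreover have "(\<integral>\<^sup>+\<omega>. ennreal (exp (c * w j * \<bar>X j \<omega>\<bar> / \<theta> j)) \<partial>M)
      \<le> ennreal (abs_normal_mgf_bound (c * S))" if j: "j \<in> J" for j
  proof -
    have "c * w j * \<bar>X j \<omega>\<bar> / \<theta> j = c * S / \<sigma> j * \<bar>X j \<omega>\<bar>" for \<omega>
      using w[OF j] \<sigma>[OF j] S by (simp add: \<theta>_def field_simps)
    then have "(\<integral>\<^sup>+\<omega>. ennreal (exp (c * w j * \<bar>X j \<omega>\<bar> / \<theta> j)) \<partial>M)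
        = (\<integral>\<^sup>+\<omega>. ennreal (exp (c * S / \<sigma> j * \<bar>X j \<omega>\<bar>)) \<partial>M)"
      by simp
    also have "\<dots> = (\<integral>\<^sup>+x. ennreal (normal_density 0 (\<sigma> j) x) * ennreal (exp (c * S / \<sigma> j * \<bar>x\<bar>)) \<partial>lborel)"
      by (rule distributed_nn_integral[OF X[OF j], symmetric]) measurable
    also have "\<dots> = (\<integral>\<^sup>+x. ennreal (normal_density 0 (\<sigma> j) x * exp (c * S / \<sigma> j * \<bar>x\<bar>)) \<partial>lborel)"
      by (simp add: ennreal_mult normal_density_nonneg)
    also have "\<dots> \<le> ennreal (abs_normal_mgf_bound (c * S / \<sigma> j * \<sigma> j))"
      using \<sigma>[OF j] S c by (intro nn_integral_normal_exp_abs_le) auto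
    finally show ?thesis using \<sigma>[OF j] by simp
  qed
  moreover have "(\<lambda>\<omega>. c * w j * \<bar>X j \<omega>\<bar>) \<in> borel_measurable M" if "j \<in> J" for j
  proof -
    have "X j \<in> borel_measurable M" using distributed_measurable[OF X[OF that]] by simp
    then show ?thesis by measurable
  qed
  ultimately have "(\<integral>\<^sup>+\<omega>. ennreal (exp (\<Sum>j\<in>J. c * w j * \<bar>X j \<omega>\<bar>)) \<partial>M)
      \<le> ennreal (abs_normal_mgf_bound (c * S))"
    using J c S \<theta> by (intro nn_integral_exp_sum_le[where \<theta>=\<theta>] abs_normal_mgf_bound_nonneg) auto
  then show ?thesis by (simp add: S_def sum_distrib_left mult.assoc)
qed

section \<open>A Riemann sum for sqrt (s / (t - s))\<close>

definition grid :: "real \<Rightarrow> nat \<Rightarrow> nat \<Rightarrow> real" where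
  "grid t N k = real k * t / real N"

lemma grid_nonneg: "t \<ge> 0 \<Longrightarrow> grid t N k \<ge> 0"
  by (simp add: grid_def)

lemma grid_Suc_diff: "N > 0 \<Longrightarrow> grid t N (Suc k) - grid t N k = t / N"
  by (simp add: grid_def field_simps)

lemma grid_mono: "t \<ge> 0 \<Longrightarrow> i \<le> j \<Longrightarrow> grid t N i \<le> grid t N j"
  by (simp add: grid_def divide_right_mono mult_right_mono)

lemma grid_less: "t > 0 \<Longrightarrow> k < N \<Longrightarrow> grid t N k < t"
  by (simp add: grid_def field_simps)

lemma grid_less_Suc: "t > 0 \<Longrightarrow> N > 0 \<Longrightarrow> grid t N k < grid t N (Suc k)"
  by (simp add: grid_def field_simps)


definition sqrt_ratio_primitive :: "real \<Rightarrow> real \<Rightarrow> real" where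
  "sqrt_ratio_primitive t s = t * arcsin (sqrt (s / t)) - sqrt (s * (t - s))"

lemma sqrt_ratio_primitive_has_real_derivative:
  assumes "0 < s" "s < t"
  shows "(sqrt_ratio_primitive t has_real_derivative sqrt (s / (t - s))) (at s)"
proof -
  define q where "q = sqrt (s * (t - s))"
  have q: "q > 0" using assms by (simp add: q_def)
  have "sqrt (1 - s / t) * sqrt (s / t) = q / t"
    using assms by (simp add: q_def real_sqrt_mult[symmetric] real_sqrt_divide field_simps power2_eq_square)
  moreover have "sqrt (s / (t - s)) = s / q"
  proof -
    have "s / q = sqrt (s\<^sup>2 / (s * (t - s)))"
      using assms by (simp add: q_def real_sqrt_divide)
    also have "s\<^sup>2 / (s * (t - s)) = s / (t - s)"
      using assms by (simp add: power2_eq_square)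
    finally show ?thesis by simp
  qed
  ultimately have "t * (inverse (sqrt (1 - (sqrt (s / t))\<^sup>2)) * (inverse (sqrt (s / t)) / 2 * (1 / t)))
      - inverse q / 2 * (1 * (t - s) + s * (0 - 1)) = sqrt (s / (t - s))"
    using assms q by (simp add: field_simps)
  moreover have "((\<lambda>s. t * arcsin (sqrt (s / t)) - sqrt (s * (t - s))) has_real_derivative
      t * (inverse (sqrt (1 - (sqrt (s / t))\<^sup>2)) * (inverse (sqrt (s / t)) / 2 * (1 / t)))
      - inverse q / 2 * (1 * (t - s) + s * (0 - 1))) (at s)"
  proof -
    have quot: "((\<lambda>z. z / t) has_real_derivative 1 / t) (at s)"
      using assms by (auto intro!: derivative_eq_intros)
    have sqrt_quot: "((\<lambda>z. sqrt (z / t)) has_real_derivative inverse (sqrt (s / t)) / 2 * (1 / t)) (at s)"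
      using DERIV_chain2[OF DERIV_real_sqrt quot] assms by simp
    have prod: "((\<lambda>z. z * (t - z)) has_real_derivative 1 * (t - s) + s * (0 - 1)) (at s)"
      by (auto intro!: derivative_eq_intros)
    have "-1 < sqrt (s / t)" "sqrt (s / t) < 1"
      using assms by (auto intro: less_le_trans[OF _ real_sqrt_ge_zero])
    then have "((\<lambda>z. arcsin (sqrt (z / t))) has_real_derivative
        inverse (sqrt (1 - (sqrt (s / t))\<^sup>2)) * (inverse (sqrt (s / t)) / 2 * (1 / t))) (at s)"
      using DERIV_chain2[OF DERIV_arcsin sqrt_quot] by simp
    moreover have "((\<lambda>z. sqrt (z * (t - z))) has_real_derivative
        inverse q / 2 * (1 * (t - s) + s * (0 - 1))) (at s)"
      using DERIV_chain2[OF DERIV_real_sqrt prod] assms by (simp add: q_def)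
    ultimately show ?thesis by (intro DERIV_diff DERIV_cmult)
  qed
  ultimately show ?thesis
    by (simp add: sqrt_ratio_primitive_def[abs_def])
qed

lemma continuous_on_sqrt_ratio_primitive: "t > 0 \<Longrightarrow> continuous_on {0..t} (sqrt_ratio_primitive t)"
  unfolding sqrt_ratio_primitive_def[abs_def]
  by (intro continuous_intros continuous_on_arcsin')
     (auto simp: field_simps real_sqrt_le_1_iff intro: order.trans[OF _ real_sqrt_ge_zero])

lemma sqrt_ratio_primitive_diff_ge:
  assumes "0 \<le> a" "a < b" "b \<le> t"
  shows "(b - a) * sqrt (a / (t - a)) \<le> sqrt_ratio_primitive t b - sqrt_ratio_primitive t a"
proof -
  have "continuous_on {a..b} (sqrt_ratio_primitive t)"
    using assms by (intro continuous_on_subset[OF continuous_on_sqrt_ratio_primitive]) auto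
  moreover have "sqrt_ratio_primitive t differentiable (at x)" if "a < x" "x < b" for x
    using sqrt_ratio_primitive_has_real_derivative[of x t] assms that
    by (auto simp: real_differentiable_def)
  ultimately obtain z l where z: "a < z" "z < b" "(sqrt_ratio_primitive t has_real_derivative l) (at z)"
      and mvt: "sqrt_ratio_primitive t b - sqrt_ratio_primitive t a = (b - a) * l"
    using MVT[OF \<open>a < b\<close>] by blast
  have "l = sqrt (z / (t - z))"
    using DERIV_unique[OF z(3) sqrt_ratio_primitive_has_real_derivative] z assms by auto
  moreover have "sqrt (a / (t - a)) \<le> sqrt (z / (t - z))"
    using z assms by (intro real_sqrt_le_mono) (auto simp: field_simps intro!: mult_mono)
  ultimately show ?thesis using mvt z by (simp add: mult_left_mono)
qed

lemma left_riemann_sum_sqrt_ratio_le: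
  assumes t: "t > 0" and N: "N > 0"
  shows "(\<Sum>j<N. t / N * sqrt (grid t N j / (t - grid t N j))) \<le> t * pi / 2"
proof -
  have "(\<Sum>j<N. t / N * sqrt (grid t N j / (t - grid t N j)))
      \<le> (\<Sum>j<N. sqrt_ratio_primitive t (grid t N (Suc j)) - sqrt_ratio_primitive t (grid t N j))"
  proof (intro sum_mono)
    fix j assume "j \<in> {..<N}"
    then have "real (Suc j) * t \<le> real N * t" using t by (intro mult_right_mono) auto
    then have "grid t N (Suc j) \<le> t" using N by (simp add: grid_def field_simps)
    then show "t / N * sqrt (grid t N j / (t - grid t N j))
        \<le> sqrt_ratio_primitive t (grid t N (Suc j)) - sqrt_ratio_primitive t (grid t N j)"
      using sqrt_ratio_primitive_diff_ge[of "grid t N j" "grid t N (Suc j)" t]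
      by (simp add: grid_Suc_diff[OF N] grid_less_Suc[OF t N] grid_nonneg t less_imp_le)
  qed
  also have "\<dots> = sqrt_ratio_primitive t (grid t N N) - sqrt_ratio_primitive t (grid t N 0)"
    by (rule sum_lessThan_telescope)
  also have "\<dots> = t * pi / 2"
    using t N by (simp add: grid_def sqrt_ratio_primitive_def)
  finally show ?thesis .
qed

section \<open>Discrete Wiener sums of 1 / (t - r)\<close>

definition grid_increment :: "(real \<Rightarrow> real) \<Rightarrow> real \<Rightarrow> nat \<Rightarrow> nat \<Rightarrow> real" where
  "grid_increment B t N k = B (grid t N (Suc k)) - B (grid t N k)"

\<comment> \<open>For a Wiener process, (t - s) times the Wiener integral of 1 / (t - r) over [0, s] is the
  Brownian bridge on [0, t]; hence the names.\<close>
definition bridge_sum :: "(real \<Rightarrow> real) \<Rightarrow> real \<Rightarrow> nat \<Rightarrow> nat \<Rightarrow> real" where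
  "bridge_sum B t N j = (\<Sum>k<j. grid_increment B t N k / (t - grid t N k))"

definition bridge_riemann_sum :: "(real \<Rightarrow> real) \<Rightarrow> real \<Rightarrow> nat \<Rightarrow> real" where
  "bridge_riemann_sum B t N = (\<Sum>j<N. t / N * \<bar>bridge_sum B t N j\<bar>)"

definition bridge_sum_sd :: "real \<Rightarrow> nat \<Rightarrow> nat \<Rightarrow> real" where
  "bridge_sum_sd t N j = sqrt (\<Sum>k<j. (t / N) / (t - grid t N k)\<^sup>2)"

lemma bridge_sum_sd_nonneg: "t \<ge> 0 \<Longrightarrow> bridge_sum_sd t N j \<ge> 0"
  by (simp add: bridge_sum_sd_def sum_nonneg)

lemma bridge_sum_sd_pos:
  assumes "t > 0" "1 \<le> j" "j < N"
  shows "bridge_sum_sd t N j > 0"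
proof -
  have "0 < (t / N) / (t - grid t N 0)\<^sup>2" using assms by (simp add: grid_def)
  also have "\<dots> \<le> (\<Sum>k<j. (t / N) / (t - grid t N k)\<^sup>2)"
    using assms by (intro member_le_sum) auto
  finally show ?thesis unfolding bridge_sum_sd_def by simp
qed

lemma bridge_sum_sd_le:
  assumes t: "t > 0" and j: "j < N"
  shows "bridge_sum_sd t N j \<le> sqrt (grid t N j / (t - grid t N j)) / sqrt t"
proof -
  have N: "N > 0" using j by simp
  have "(\<Sum>k<j. (t / N) / (t - grid t N k)\<^sup>2)
      \<le> (\<Sum>k<j. 1 / (t - grid t N (Suc k)) - 1 / (t - grid t N k))"
  proof (rule sum_mono)
    fix k assume "k \<in> {..<j}"
    then have pos: "t - grid t N (Suc k) > 0" using grid_less[OF t, of "Suc k" N] j by simp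
    have le: "t - grid t N (Suc k) \<le> t - grid t N k" using grid_less_Suc[OF t N, of k] by simp
    have "(t / N) / (t - grid t N k)\<^sup>2 \<le> (t / N) / ((t - grid t N k) * (t - grid t N (Suc k)))"
      using pos le t N by (intro divide_left_mono) (auto simp: power2_eq_square intro!: mult_left_mono)
    also have "\<dots> = 1 / (t - grid t N (Suc k)) - 1 / (t - grid t N k)"
      using pos le grid_Suc_diff[OF N, of t k] by (simp add: field_simps)
    finally show "(t / N) / (t - grid t N k)\<^sup>2 \<le> 1 / (t - grid t N (Suc k)) - 1 / (t - grid t N k)" .
  qed
  also have "\<dots> = 1 / (t - grid t N j) - 1 / t"
    by (subst sum_lessThan_telescope) (simp add: grid_def)
  also have "\<dots> = (grid t N j / (t - grid t N j)) / t"
    using grid_less[OF t j] t by (simp add: field_simps)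
  finally show ?thesis
    unfolding bridge_sum_sd_def by (simp add: real_sqrt_le_mono flip: real_sqrt_divide)
qed

lemma sum_bridge_sum_sd_le:
  assumes t: "t > 0" and N: "N > 0"
  shows "(\<Sum>j<N. t / N * bridge_sum_sd t N j) \<le> pi / 2 * sqrt t"
proof -
  have "(\<Sum>j<N. t / N * bridge_sum_sd t N j)
      \<le> (\<Sum>j<N. t / N * (sqrt (grid t N j / (t - grid t N j)) / sqrt t))"
    using t by (intro sum_mono mult_left_mono bridge_sum_sd_le) auto
  also have "\<dots> = (\<Sum>j<N. t / N * sqrt (grid t N j / (t - grid t N j))) / sqrt t"
    by (simp add: sum_divide_distrib)
  also have "\<dots> \<le> (t * pi / 2) / sqrt t"
    using left_riemann_sum_sqrt_ratio_le[OF t N] t by (intro divide_right_mono) auto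
  also have "\<dots> = pi / 2 * sqrt t"
    using t by (simp add: field_simps)
  finally show ?thesis .
qed

lemma wiener_process_grid_increments:
  assumes wp: "wiener_process M d W" and t: "t > 0" and N: "N > 0"
  shows "prob_space M"
    and "prob_space.indep_vars M (\<lambda>_. borel)
           (\<lambda>(i, k) \<omega>. grid_increment (\<lambda>r. W i r \<omega>) t N k) ({..<d} \<times> {..<N})"
    and "i < d \<Longrightarrow> k < N \<Longrightarrow> distributed M lborel (\<lambda>\<omega>. grid_increment (\<lambda>r. W i r \<omega>) t N k)
           (\<lambda>x. ennreal (normal_density 0 (sqrt (t / N)) x))"
proof -
  have "0 \<le> grid t N 0" "\<forall>k<N. grid t N k < grid t N (Suc k)"
    using grid_less_Suc[OF t N] by (auto simp: grid_def)
  then have "prob_space.indep_vars M (\<lambda>_. borel)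
        (\<lambda>(i, k) \<omega>. W i (grid t N (Suc k)) \<omega> - W i (grid t N k) \<omega>) ({..<d} \<times> {..<N}) \<and>
      (\<forall>i<d. \<forall>k<N. distributed M lborel (\<lambda>\<omega>. W i (grid t N (Suc k)) \<omega> - W i (grid t N k) \<omega>)
        (\<lambda>x. ennreal (normal_density 0 (sqrt (grid t N (Suc k) - grid t N k)) x)))"
    using wp unfolding wiener_process_def by blast
  then show "prob_space M"
    and "prob_space.indep_vars M (\<lambda>_. borel)
           (\<lambda>(i, k) \<omega>. grid_increment (\<lambda>r. W i r \<omega>) t N k) ({..<d} \<times> {..<N})"
    and "i < d \<Longrightarrow> k < N \<Longrightarrow> distributed M lborel (\<lambda>\<omega>. grid_increment (\<lambda>r. W i r \<omega>) t N k)
           (\<lambda>x. ennreal (normal_density 0 (sqrt (t / N)) x))"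
    using wp N by (simp_all add: wiener_process_def grid_increment_def grid_Suc_diff)
qed

lemma bridge_sum_normal:
  assumes wp: "wiener_process M d W" and t: "t > 0" and i: "i < d" and j: "1 \<le> j" "j < N"
  shows "distributed M lborel (\<lambda>\<omega>. bridge_sum (\<lambda>r. W i r \<omega>) t N j)
           (\<lambda>x. ennreal (normal_density 0 (bridge_sum_sd t N j) x))"
proof -
  have N: "N > 0" using j by simp
  interpret prob_space M using wiener_process_grid_increments(1)[OF wp t N] .
  define a where "a k = 1 / (t - grid t N k)" for k
  have a: "a k > 0" if "k < N" for k using grid_less[OF t that] by (simp add: a_def)
  define X where "X p \<omega> = a (snd p) * grid_increment (\<lambda>r. W i r \<omega>) t N (snd p)"
    for p :: "nat \<times> nat" and \<omega>
  have "indep_vars (\<lambda>_. borel) (\<lambda>(i, k) \<omega>. grid_increment (\<lambda>r. W i r \<omega>) t N k) ({i} \<times> {..<j})"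
    using i j by (intro indep_vars_subset[OF wiener_process_grid_increments(2)[OF wp t N]]) auto
  then have "indep_vars (\<lambda>_. borel)
      (\<lambda>p \<omega>. a (snd p) * (\<lambda>(i, k) \<omega>. grid_increment (\<lambda>r. W i r \<omega>) t N k) p \<omega>) ({i} \<times> {..<j})"
    by (rule indep_vars_compose2) auto
  then have "indep_vars (\<lambda>_. borel) X ({i} \<times> {..<j})"
    by (rule indep_vars_cong[THEN iffD1, rotated 3]) (auto simp: X_def)
  moreover have "distributed M lborel (X p) (normal_density 0 (a (snd p) * sqrt (t / N)))"
    if "p \<in> {i} \<times> {..<j}" for p
  proof -
    have k: "snd p < N" "fst p = i" using that j by auto
    have "distributed M lborel (\<lambda>\<omega>. 0 + a (snd p) * grid_increment (\<lambda>r. W i r \<omega>) t N (snd p))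
        (normal_density (0 + a (snd p) * 0) (\<bar>a (snd p)\<bar> * sqrt (t / N)))"
      using a[OF k(1)] t N
      by (intro normal_density_affine wiener_process_grid_increments(3)[OF wp t N i k(1)]) auto
    then show ?thesis using a[OF k(1)] by (simp add: X_def[abs_def])
  qed
  ultimately have "distributed M lborel (\<lambda>\<omega>. \<Sum>p\<in>{i} \<times> {..<j}. X p \<omega>)
      (normal_density (\<Sum>p\<in>{i} \<times> {..<j}. 0) (sqrt (\<Sum>p\<in>{i} \<times> {..<j}. (a (snd p) * sqrt (t / N))\<^sup>2)))"
    using j t N a by (intro sum_indep_normal) (auto simp: lessThan_empty_iff)
  moreover have "{i} \<times> {..<j} = (\<lambda>k. (i, k)) ` {..<j}" by auto
  moreover have "(a k * sqrt (t / N))\<^sup>2 = (t / N) / (t - grid t N k)\<^sup>2" for k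
    using t by (simp add: a_def power_mult_distrib power_divide)
  ultimately show ?thesis
    by (simp add: sum.reindex inj_on_def X_def a_def bridge_sum_def bridge_sum_sd_def)
qed

lemma nn_integral_exp_bridge_riemann_sum_le:
  assumes wp: "wiener_process M d W" and t: "t > 0" and c: "c \<ge> 0" and i: "i < d" and N: "2 \<le> N"
  shows "(\<integral>\<^sup>+\<omega>. ennreal (exp (c * bridge_riemann_sum (\<lambda>r. W i r \<omega>) t N)) \<partial>M)
           \<le> ennreal (abs_normal_mgf_bound (c * (pi / 2 * sqrt t)))"
proof -
  \<comment> \<open>The sum with j = 0 vanishes; it is dropped since it is a degenerate Gaussian.\<close>
  have "{..<N} = insert 0 {1..<N}" using N by auto
  then have "bridge_riemann_sum B t N = (\<Sum>j\<in>{1..<N}. t / N * \<bar>bridge_sum B t N j\<bar>)" for B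
    by (simp add: bridge_riemann_sum_def bridge_sum_def)
  then have "(\<integral>\<^sup>+\<omega>. ennreal (exp (c * bridge_riemann_sum (\<lambda>r. W i r \<omega>) t N)) \<partial>M)
      = (\<integral>\<^sup>+\<omega>. ennreal (exp (c * (\<Sum>j\<in>{1..<N}. t / N * \<bar>bridge_sum (\<lambda>r. W i r \<omega>) t N j\<bar>))) \<partial>M)"
    by simp
  also have "\<dots> \<le> ennreal (abs_normal_mgf_bound (c * (\<Sum>j\<in>{1..<N}. t / N * bridge_sum_sd t N j)))"
    using N t c bridge_sum_sd_pos[OF t] bridge_sum_normal[OF wp t i]
    by (intro nn_integral_exp_weighted_sum_abs_normal_le) auto
  also have "\<dots> \<le> ennreal (abs_normal_mgf_bound (c * (pi / 2 * sqrt t)))"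
  proof (intro ennreal_leI abs_normal_mgf_bound_mono mult_left_mono c)
    have "(\<Sum>j\<in>{1..<N}. t / N * bridge_sum_sd t N j) \<le> (\<Sum>j<N. t / N * bridge_sum_sd t N j)"
      using t by (intro sum_mono2) (auto simp: bridge_sum_sd_nonneg)
    also have "\<dots> \<le> pi / 2 * sqrt t"
      using N t by (intro sum_bridge_sum_sd_le) auto
    finally show "(\<Sum>j\<in>{1..<N}. t / N * bridge_sum_sd t N j) \<le> pi / 2 * sqrt t" .
    show "0 \<le> c * (\<Sum>j\<in>{1..<N}. t / N * bridge_sum_sd t N j)"
      using t c by (intro mult_nonneg_nonneg sum_nonneg) (auto simp: bridge_sum_sd_nonneg)
  qed
  finally show ?thesis .
qed

lemma borel_measurable_bridge_riemann_sum:
  assumes "\<And>r. r \<ge> 0 \<Longrightarrow> B r \<in> borel_measurable M" and "t \<ge> 0"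
  shows "(\<lambda>\<omega>. bridge_riemann_sum (\<lambda>r. B r \<omega>) t N) \<in> borel_measurable M"
  using assms grid_nonneg
  unfolding bridge_riemann_sum_def bridge_sum_def grid_increment_def by measurable

lemma borel_measurable_exp_sum_bridge_riemann_sum:
  assumes "wiener_process M d W" and "t \<ge> 0"
  shows "(\<lambda>\<omega>. ennreal (exp (c * (\<Sum>i<d. bridge_riemann_sum (\<lambda>r. W i r \<omega>) t N)))) \<in> borel_measurable M"
proof -
  have "(\<lambda>\<omega>. \<Sum>i<d. bridge_riemann_sum (\<lambda>r. W i r \<omega>) t N) \<in> borel_measurable M"
    using assms by (intro borel_measurable_sum borel_measurable_bridge_riemann_sum) (auto simp: wiener_process_def)
  then show ?thesis by measurable
qed

lemma nn_integral_exp_sum_bridge_riemann_sum_le: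
  assumes wp: "wiener_process M d W" and t: "t > 0" and c: "c \<ge> 0" and N: "2 \<le> N"
  shows "(\<integral>\<^sup>+\<omega>. ennreal (exp (c * (\<Sum>i<d. bridge_riemann_sum (\<lambda>r. W i r \<omega>) t N))) \<partial>M)
           \<le> ennreal (abs_normal_mgf_bound (c * (pi / 2 * sqrt t)) ^ d)"
proof -
  have N0: "N > 0" using N by simp
  interpret prob_space M using wiener_process_grid_increments(1)[OF wp t N0] .
  define \<Delta> where "\<Delta> p \<omega> = grid_increment (\<lambda>r. W (fst p) r \<omega>) t N (snd p)" for p :: "nat \<times> nat" and \<omega>
  \<comment> \<open>The i-th component only depends on the increments indexed by {i} \<times> {..<N}.\<close>
  define Y where "Y i x = ennreal (exp (c * (\<Sum>j<N. t / N * \<bar>\<Sum>k<j. x (i, k) / (t - grid t N k)\<bar>)))"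
    for i and x :: "nat \<times> nat \<Rightarrow> real"
  have "indep_vars (\<lambda>i. PiM ({i} \<times> {..<N}) (\<lambda>_. borel)) (\<lambda>i \<omega>. restrict (\<lambda>p. \<Delta> p \<omega>) ({i} \<times> {..<N})) {..<d}"
    using wiener_process_grid_increments(2)[OF wp t N0]
    by (intro indep_vars_restrict) (auto simp: disjoint_family_on_def \<Delta>_def[abs_def] case_prod_beta')
  moreover have "Y i \<in> borel_measurable (PiM ({i} \<times> {..<N}) (\<lambda>_. borel))" for i
  proof -
    have "(\<lambda>x. x (i, k)) \<in> borel_measurable (PiM ({i} \<times> {..<N}) (\<lambda>_. borel))" if "k < N" for k
      using that by (intro measurable_component_singleton) auto
    then show ?thesis unfolding Y_def by measurable
  qed
  ultimately have "indep_vars (\<lambda>_. borel) (\<lambda>i \<omega>. Y i (restrict (\<lambda>p. \<Delta> p \<omega>) ({i} \<times> {..<N}))) {..<d}"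
    by (rule indep_vars_compose2)
  moreover have "Y i (restrict (\<lambda>p. \<Delta> p \<omega>) ({i} \<times> {..<N}))
      = ennreal (exp (c * bridge_riemann_sum (\<lambda>r. W i r \<omega>) t N))" for i \<omega>
    unfolding Y_def bridge_riemann_sum_def bridge_sum_def \<Delta>_def
    by (intro arg_cong[where f="\<lambda>x. ennreal (exp (c * x))"] sum.cong refl arg_cong[where f="\<lambda>x. _ * \<bar>x\<bar>"]) auto
  ultimately have indep: "indep_vars (\<lambda>_. borel) (\<lambda>i \<omega>. ennreal (exp (c * bridge_riemann_sum (\<lambda>r. W i r \<omega>) t N))) {..<d}"
    by simp
  have "(\<integral>\<^sup>+\<omega>. ennreal (exp (c * (\<Sum>i<d. bridge_riemann_sum (\<lambda>r. W i r \<omega>) t N))) \<partial>M)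
      = (\<integral>\<^sup>+\<omega>. (\<Prod>i<d. ennreal (exp (c * bridge_riemann_sum (\<lambda>r. W i r \<omega>) t N))) \<partial>M)"
    by (simp add: sum_distrib_left exp_sum prod_ennreal)
  also have "\<dots> = (\<Prod>i<d. \<integral>\<^sup>+\<omega>. ennreal (exp (c * bridge_riemann_sum (\<lambda>r. W i r \<omega>) t N)) \<partial>M)"
    by (rule indep_vars_nn_integral[OF _ indep]) auto
  also have "\<dots> \<le> (\<Prod>i<d. ennreal (abs_normal_mgf_bound (c * (pi / 2 * sqrt t))))"
    by (intro prod_mono_ennreal nn_integral_exp_bridge_riemann_sum_le[OF wp t c _ N]) auto
  also have "\<dots> = ennreal (abs_normal_mgf_bound (c * (pi / 2 * sqrt t)) ^ d)"
    using c t by (simp add: prod_ennreal ennreal_power abs_normal_mgf_bound_nonneg)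
  finally show ?thesis .
qed

section \<open>Convergence to the Wiener integral\<close>

definition bridge_integral :: "(real \<Rightarrow> real) \<Rightarrow> real \<Rightarrow> real \<Rightarrow> real" where
  "bridge_integral B t s = B s / (t - s) - integral {0..s} (\<lambda>r. B r / (t - r)\<^sup>2)"

lemma wiener_integral_eq_bridge_integral:
  assumes "s < t"
  shows "wiener_integral (\<lambda>r. 1 / (t - r)) W s \<omega> = bridge_integral (\<lambda>r. W r \<omega>) t s"
proof -
  have "deriv (\<lambda>r. 1 / (t - r)) r = 1 / (t - r)\<^sup>2" if "r \<in> {0..s}" for r
    using that assms
    by (intro DERIV_imp_deriv) (auto intro!: derivative_eq_intros simp: power2_eq_square field_simps)
  then have "integral {0..s} (\<lambda>r. deriv (\<lambda>r. 1 / (t - r)) r * W r \<omega>) = integral {0..s} (\<lambda>r. W r \<omega> / (t - r)\<^sup>2)"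
    by (intro Henstock_Kurzweil_Integration.integral_cong) simp
  then show ?thesis by (simp add: wiener_integral_def bridge_integral_def)
qed

lemma has_integral_inverse_square:
  fixes u v t :: real
  assumes "u \<le> v" "v < t"
  shows "((\<lambda>r. 1 / (t - r)\<^sup>2) has_integral (1 / (t - v) - 1 / (t - u))) {u..v}"
proof (rule fundamental_theorem_of_calculus[OF assms(1)])
  fix x assume "x \<in> {u..v}"
  then show "((\<lambda>r. 1 / (t - r)) has_vector_derivative 1 / (t - x)\<^sup>2) (at x within {u..v})"
    using assms unfolding has_real_derivative_iff_has_vector_derivative[symmetric]
    by (auto intro!: derivative_eq_intros simp: power2_eq_square field_simps)
qed

lemma integrable_on_div_square:
  fixes B :: "real \<Rightarrow> real"
  assumes "continuous_on {u..v} B" "v < t"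
  shows "(\<lambda>r. B r / (t - r)\<^sup>2) integrable_on {u..v}"
  using assms by (intro integrable_continuous_interval continuous_intros) auto

lemma integral_div_square_approx:
  fixes B :: "real \<Rightarrow> real"
  assumes B: "continuous_on {u..v} B" and uv: "u \<le> v" "v < t"
    and e: "\<And>r. r \<in> {u..v} \<Longrightarrow> \<bar>B v - B r\<bar> \<le> e"
  shows "\<bar>integral {u..v} (\<lambda>r. B r / (t - r)\<^sup>2) - (1 / (t - v) - 1 / (t - u)) * B v\<bar>
           \<le> e * (1 / (t - v) - 1 / (t - u))"
proof -
  note inv = has_integral_inverse_square[OF uv]
  note Bv = has_integral_mult_right[OF inv, of "B v"]
  have "integral {u..v} (\<lambda>r. B r / (t - r)\<^sup>2) - (1 / (t - v) - 1 / (t - u)) * B v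
      = integral {u..v} (\<lambda>r. (B r - B v) / (t - r)\<^sup>2)"
    using integral_diff[OF integrable_on_div_square[OF B uv(2)] has_integral_integrable[OF Bv]]
      integral_unique[OF Bv]
    by (simp add: diff_divide_distrib mult.commute)
  also have "\<bar>\<dots>\<bar> \<le> integral {u..v} (\<lambda>r. e * (1 / (t - r)\<^sup>2))"
    unfolding real_norm_def[symmetric]
  proof (rule integral_norm_bound_integral)
    show "(\<lambda>r. (B r - B v) / (t - r)\<^sup>2) integrable_on {u..v}"
      using B uv by (intro integrable_on_div_square continuous_intros) auto
    show "(\<lambda>r. e * (1 / (t - r)\<^sup>2)) integrable_on {u..v}"
      using has_integral_integrable[OF has_integral_mult_right[OF inv]] .
    show "norm ((B r - B v) / (t - r)\<^sup>2) \<le> e * (1 / (t - r)\<^sup>2)" if "r \<in> {u..v}" for r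
      using e[OF that] by (simp add: abs_div divide_right_mono abs_minus_commute)
  qed
  also have "\<dots> = e * (1 / (t - v) - 1 / (t - u))"
    by (rule integral_unique[OF has_integral_mult_right[OF inv]])
  finally show ?thesis .
qed

lemma bridge_sum_approx:
  fixes B :: "real \<Rightarrow> real"
  assumes t: "t > 0" and B: "continuous_on {0..t} B" "B 0 = 0"
    and e: "\<And>x y. x \<in> {0..t} \<Longrightarrow> y \<in> {0..t} \<Longrightarrow> \<bar>x - y\<bar> \<le> t / N \<Longrightarrow> \<bar>B x - B y\<bar> \<le> e"
    and j: "j < N"
  shows "\<bar>bridge_sum B t N j - bridge_integral B t (grid t N j)\<bar> \<le> e * (1 / (t - grid t N j) - 1 / t)"
  using j
proof (induction j)
  case 0
  then show ?case using B by (simp add: bridge_sum_def bridge_integral_def grid_def)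
next
  case (Suc j)
  have N: "N > 0" using Suc by simp
  define u where "u = grid t N j"
  define v where "v = grid t N (Suc j)"
  have u: "0 \<le> u" "u \<le> v" and v: "v < t" "v - u = t / N"
    using t N Suc.prems grid_less_Suc[OF t N, of j] grid_less[OF t Suc.prems] grid_Suc_diff[OF N]
    by (auto simp: u_def v_def grid_nonneg)
  have Bv: "continuous_on {0..v} B" using B v by (auto intro: continuous_on_subset)
  have "bridge_sum B t N (Suc j) = bridge_sum B t N j + (B v - B u) / (t - u)"
    by (simp add: bridge_sum_def grid_increment_def u_def v_def)
  moreover have "integral {0..v} (\<lambda>r. B r / (t - r)\<^sup>2)
      = integral {0..u} (\<lambda>r. B r / (t - r)\<^sup>2) + integral {u..v} (\<lambda>r. B r / (t - r)\<^sup>2)"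
    using Henstock_Kurzweil_Integration.integral_combine[OF u integrable_on_div_square[OF Bv v(1)]] ..
  ultimately have "bridge_sum B t N (Suc j) - bridge_integral B t v
      = (bridge_sum B t N j - bridge_integral B t u)
        + (integral {u..v} (\<lambda>r. B r / (t - r)\<^sup>2) - (1 / (t - v) - 1 / (t - u)) * B v)"
    by (simp add: bridge_integral_def diff_divide_distrib algebra_simps)
  also have "\<bar>\<dots>\<bar> \<le> e * (1 / (t - u) - 1 / t) + e * (1 / (t - v) - 1 / (t - u))"
  proof (rule order.trans[OF abs_triangle_ineq add_mono])
    show "\<bar>bridge_sum B t N j - bridge_integral B t u\<bar> \<le> e * (1 / (t - u) - 1 / t)"
      using Suc by (simp add: u_def)
    show "\<bar>integral {u..v} (\<lambda>r. B r / (t - r)\<^sup>2) - (1 / (t - v) - 1 / (t - u)) * B v\<bar>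
        \<le> e * (1 / (t - v) - 1 / (t - u))"
      using B u v by (intro integral_div_square_approx e) (auto intro: continuous_on_subset)
  qed
  finally show ?case by (simp add: v_def algebra_simps)
qed

lemma continuous_on_bridge_integral:
  fixes B :: "real \<Rightarrow> real"
  assumes "continuous_on {0..t} B" "s < t"
  shows "continuous_on {0..s} (bridge_integral B t)"
proof -
  have B: "continuous_on {0..s} B" by (rule continuous_on_subset[OF assms(1)]) (use assms in auto)
  show ?thesis
    unfolding bridge_integral_def[abs_def] using assms B
    by (intro continuous_intros indefinite_integral_continuous_1 integrable_on_div_square[OF B]) auto
qed

definition grid_index :: "real \<Rightarrow> nat \<Rightarrow> real \<Rightarrow> nat" where
  "grid_index t N s = nat \<lfloor>s * N / t\<rfloor>"

lemma grid_index:
  assumes t: "t > 0" and s: "0 \<le> s" "s < t" and N: "N > 0"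
  shows "grid_index t N s < N" "grid t N (grid_index t N s) \<le> s" "s < grid t N (Suc (grid_index t N s))"
proof -
  define x where "x = s * N / t"
  have "s * N < t * N" using s N by simp
  then have x: "0 \<le> x" "x < N" using s t by (simp_all add: x_def field_simps)
  then have "real (grid_index t N s) = of_int \<lfloor>x\<rfloor>" by (simp add: grid_index_def x_def)
  then have "real (grid_index t N s) \<le> x" "x < real (grid_index t N s) + 1" by linarith+
  then show "grid t N (grid_index t N s) \<le> s" "s < grid t N (Suc (grid_index t N s))"
    using t N by (simp_all add: grid_def x_def field_simps)
  show "grid_index t N s < N" using x \<open>real (grid_index t N s) \<le> x\<close> by simp
qed

lemma bridge_sum_tendsto:
  fixes B :: "real \<Rightarrow> real"
  assumes t: "t > 0" and B: "continuous_on {0..t} B" "B 0 = 0" and s: "0 \<le> s" "s < t"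
  shows "(\<lambda>N. bridge_sum B t N (grid_index t N s)) \<longlonglongrightarrow> bridge_integral B t s"
proof (rule tendstoI)
  fix \<epsilon> :: real assume "\<epsilon> > 0"
  define e where "e = \<epsilon> * (t - s) / 2"
  have e: "e > 0" using \<open>\<epsilon> > 0\<close> s by (simp add: e_def)
  obtain \<delta> where \<delta>: "\<delta> > 0" "\<And>x y. x \<in> {0..t} \<Longrightarrow> y \<in> {0..t} \<Longrightarrow> dist y x < \<delta> \<Longrightarrow> dist (B y) (B x) < e"
    using compact_uniformly_continuous[OF B(1) compact_Icc] e unfolding uniformly_continuous_on_def by metis
  obtain \<delta>' where \<delta>': "\<delta>' > 0"
      "\<And>x. x \<in> {0..s} \<Longrightarrow> dist x s < \<delta>' \<Longrightarrow> dist (bridge_integral B t x) (bridge_integral B t s) < \<epsilon> / 2"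
    using continuous_on_bridge_integral[OF B(1) s(2)] \<open>\<epsilon> > 0\<close> s unfolding continuous_on_iff
    by (metis atLeastAtMost_iff half_gt_zero order_refl)
  have "\<forall>\<^sub>F N in sequentially. t / N < min \<delta> \<delta>'"
    using \<delta> \<delta>' by (intro order_tendstoD(2)[OF lim_const_over_n]) auto
  then show "\<forall>\<^sub>F N in sequentially. dist (bridge_sum B t N (grid_index t N s)) (bridge_integral B t s) < \<epsilon>"
    using eventually_gt_at_top[of 0]
  proof eventually_elim
    case (elim N)
    define j where "j = grid_index t N s"
    have j: "j < N" "grid t N j \<le> s" "s - grid t N j < t / N"
      using grid_index[OF t s elim(2)] grid_Suc_diff[OF elim(2), of t j] by (simp_all add: j_def)
    have "\<bar>bridge_sum B t N j - bridge_integral B t (grid t N j)\<bar> \<le> e * (1 / (t - grid t N j) - 1 / t)"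
    proof (rule bridge_sum_approx[OF t B _ j(1)])
      fix x y assume "x \<in> {0..t}" "y \<in> {0..t}" "\<bar>x - y\<bar> \<le> t / N"
      then show "\<bar>B x - B y\<bar> \<le> e" using \<delta>(2)[of y x] elim(1) by (simp add: dist_real_def)
    qed
    also have "\<dots> \<le> e * (1 / (t - s))"
    proof (intro mult_left_mono)
      have "1 / (t - grid t N j) \<le> 1 / (t - s)" using j(2) s by (intro frac_le) auto
      then show "1 / (t - grid t N j) - 1 / t \<le> 1 / (t - s)" using t by (smt (verit) divide_pos_pos)
    qed (use e in simp)
    also have "\<dots> = \<epsilon> / 2" using s by (simp add: e_def field_simps)
    finally have "\<bar>bridge_sum B t N j - bridge_integral B t (grid t N j)\<bar> \<le> \<epsilon> / 2" .
    moreover have "dist (bridge_integral B t (grid t N j)) (bridge_integral B t s) < \<epsilon> / 2"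
      using j elim(1) t by (intro \<delta>'(2)) (auto simp: dist_real_def grid_nonneg)
    ultimately show ?case unfolding dist_real_def j_def by linarith
  qed
qed

definition bridge_step :: "(real \<Rightarrow> real) \<Rightarrow> real \<Rightarrow> nat \<Rightarrow> real \<Rightarrow> real" where
  "bridge_step B t N s = (\<Sum>j<N. indicator {grid t N j..<grid t N (Suc j)} s * \<bar>bridge_sum B t N j\<bar>)"

lemma bridge_step_eq:
  assumes t: "t > 0" and s: "0 \<le> s" "s < t" and N: "N > 0"
  shows "bridge_step B t N s = \<bar>bridge_sum B t N (grid_index t N s)\<bar>"
proof -
  note J = grid_index[OF t s N]
  have "s \<in> {grid t N j..<grid t N (Suc j)} \<longleftrightarrow> j = grid_index t N s" for j
  proof
    assume "s \<in> {grid t N j..<grid t N (Suc j)}"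
    then have "\<not> j < grid_index t N s" "\<not> grid_index t N s < j"
      using J grid_mono[of t "Suc j" "grid_index t N s" N] grid_mono[of t "Suc (grid_index t N s)" j N] t
      by (auto simp: Suc_le_eq)
    then show "j = grid_index t N s" by simp
  qed (use J in simp)
  then have "bridge_step B t N s = (\<Sum>j<N. if j = grid_index t N s then \<bar>bridge_sum B t N j\<bar> else 0)"
    unfolding bridge_step_def by (intro sum.cong) (auto simp: indicator_def)
  also have "\<dots> = \<bar>bridge_sum B t N (grid_index t N s)\<bar>" using J by simp
  finally show ?thesis .
qed

lemma nn_integral_bridge_step:
  assumes t: "t > 0" and N: "N > 0"
  shows "(\<integral>\<^sup>+s. ennreal (bridge_step B t N s) \<partial>lborel) = ennreal (bridge_riemann_sum B t N)"
proof -
  have "(\<integral>\<^sup>+s. ennreal (bridge_step B t N s) \<partial>lborel)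
      = (\<integral>\<^sup>+s. (\<Sum>j<N. ennreal \<bar>bridge_sum B t N j\<bar> * indicator {grid t N j..<grid t N (Suc j)} s) \<partial>lborel)"
    unfolding bridge_step_def
    by (intro nn_integral_cong, subst sum_ennreal[symmetric]) (auto intro!: sum.cong simp: indicator_def)
  also have "\<dots> = (\<Sum>j<N. \<integral>\<^sup>+s. ennreal \<bar>bridge_sum B t N j\<bar> * indicator {grid t N j..<grid t N (Suc j)} s \<partial>lborel)"
    by (rule nn_integral_sum) auto
  also have "\<dots> = (\<Sum>j<N. ennreal \<bar>bridge_sum B t N j\<bar> * ennreal (t / N))"
    using grid_less_Suc[OF t N]
    by (intro sum.cong refl) (simp add: nn_integral_cmult_indicator less_imp_le grid_Suc_diff[OF N])
  also have "\<dots> = ennreal (bridge_riemann_sum B t N)"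
    using t unfolding bridge_riemann_sum_def
    by (subst sum_ennreal[symmetric]) (auto intro!: sum.cong simp: ennreal_mult[symmetric] mult.commute)
  finally show ?thesis .
qed

\<comment> \<open>If f is not integrable, its Lebesgue integral is 0 by convention.\<close>
lemma ennreal_integral_le_nn_integral:
  fixes f :: "'a \<Rightarrow> real"
  assumes "\<And>x. 0 \<le> f x"
  shows "ennreal (integral\<^sup>L M f) \<le> (\<integral>\<^sup>+x. ennreal (f x) \<partial>M)"
  using assms by (cases "integrable M f") (simp_all add: nn_integral_eq_integral not_integrable_integral_eq)

\<comment> \<open>Fatou's lemma for the step functions, which converge to the integrand on [0, t); the value
  of the integrand at t does not matter.\<close>
lemma wiener_integral_abs_le_liminf:
  fixes W :: "real \<Rightarrow> 'a \<Rightarrow> real"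
  assumes t: "t > 0" and W: "continuous_on {0..t} (\<lambda>r. W r \<omega>)" "W 0 \<omega> = 0"
  shows "ennreal (LINT s:{0..t}|lborel. \<bar>wiener_integral (\<lambda>r. 1 / (t - r)) W s \<omega>\<bar>)
           \<le> liminf (\<lambda>N. ennreal (bridge_riemann_sum (\<lambda>r. W r \<omega>) t N))"
proof -
  define B where "B = (\<lambda>r. W r \<omega>)"
  have B: "continuous_on {0..t} B" "B 0 = 0" using W by (simp_all add: B_def)
  have "ennreal (LINT s:{0..t}|lborel. \<bar>wiener_integral (\<lambda>r. 1 / (t - r)) W s \<omega>\<bar>)
      \<le> (\<integral>\<^sup>+s. ennreal (indicator {0..t} s * \<bar>wiener_integral (\<lambda>r. 1 / (t - r)) W s \<omega>\<bar>) \<partial>lborel)"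
    unfolding set_lebesgue_integral_def real_scaleR_def by (rule ennreal_integral_le_nn_integral) simp
  also have "\<dots> = (\<integral>\<^sup>+s. ennreal (indicator {0..<t} s * \<bar>bridge_integral B t s\<bar>) \<partial>lborel)"
    using AE_lborel_singleton[of t]
    by (intro nn_integral_cong_AE, eventually_elim)
      (auto simp: indicator_def wiener_integral_eq_bridge_integral B_def)
  also have "\<dots> \<le> (\<integral>\<^sup>+s. liminf (\<lambda>N. ennreal (bridge_step B t N s)) \<partial>lborel)"
  proof (intro nn_integral_mono)
    fix s :: real
    show "ennreal (indicator {0..<t} s * \<bar>bridge_integral B t s\<bar>) \<le> liminf (\<lambda>N. ennreal (bridge_step B t N s))"
    proof (cases "0 \<le> s \<and> s < t")
      case True
      have "\<forall>\<^sub>F N in sequentially. bridge_step B t N s = \<bar>bridge_sum B t N (grid_index t N s)\<bar>"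
        using True t by (intro eventually_mono[OF eventually_gt_at_top[of 0]]) (simp add: bridge_step_eq)
      then have "(\<lambda>N. ennreal (bridge_step B t N s)) \<longlonglongrightarrow> ennreal \<bar>bridge_integral B t s\<bar>"
        using True by (intro tendsto_ennrealI Lim_transform_eventually[OF tendsto_rabs[OF bridge_sum_tendsto[OF t B]]])
          (auto elim: eventually_mono)
      then show ?thesis using True by (simp add: lim_imp_Liminf)
    qed simp
  qed
  also have "\<dots> \<le> liminf (\<lambda>N. \<integral>\<^sup>+s. ennreal (bridge_step B t N s) \<partial>lborel)"
    by (rule nn_integral_liminf) (unfold bridge_step_def, measurable)
  also have "\<dots> = liminf (\<lambda>N. ennreal (bridge_riemann_sum B t N))"
    using t by (intro Liminf_eq eventually_mono[OF eventually_gt_at_top[of 0]]) (simp add: nn_integral_bridge_step)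
  finally show ?thesis by (simp add: B_def)
qed


lemma eventually_less_of_ennreal_le_liminf:
  fixes a :: real and b :: "nat \<Rightarrow> real"
  assumes le: "ennreal a \<le> liminf (\<lambda>n. ennreal (b n))" and b: "\<And>n. b n \<ge> 0" and e: "e > 0"
  shows "\<forall>\<^sub>F n in sequentially. a - e < b n"
proof (cases "a - e < 0")
  case True
  then have "a - e < b n" for n using b[of n] by linarith
  then show ?thesis by simp
next
  case False
  then have "ennreal (a - e) < ennreal a" using e by (simp add: ennreal_less_iff)
  then have "\<forall>\<^sub>F n in sequentially. ennreal (a - e) < ennreal (b n)"
    using le by (auto simp: le_Liminf_iff)
  then show ?thesis
    by eventually_elim (use False in \<open>auto simp: ennreal_less_iff\<close>)
qed

lemma ennreal_exp_le_liminf: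
  fixes a :: real and b :: "nat \<Rightarrow> real"
  assumes c: "c \<ge> 0" and ev: "\<And>e. e > 0 \<Longrightarrow> \<forall>\<^sub>F n in sequentially. a - e < b n"
  shows "ennreal (exp (c * a)) \<le> liminf (\<lambda>n. ennreal (exp (c * b n)))"
  unfolding le_Liminf_iff
proof (intro allI impI)
  fix y assume y: "y < ennreal (exp (c * a))"
  then obtain y' where y': "y = ennreal y'" "0 \<le> y'" "y' < exp (c * a)"
    by (cases y rule: ennreal_cases) (auto simp: ennreal_less_iff)
  have "((\<lambda>e. exp (c * (a - e))) \<longlongrightarrow> exp (c * a)) (at_right 0)"
    by (auto intro!: tendsto_eq_intros)
  then have "\<forall>\<^sub>F e in at_right 0. y' < exp (c * (a - e))"
    using y'(3) by (rule order_tendstoD)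
  then obtain e where e: "e > 0" "y' < exp (c * (a - e))"
    unfolding eventually_at_right[OF zero_less_one] by (metis field_lbound_gt_zero zero_less_one)
  show "\<forall>\<^sub>F n in sequentially. y < ennreal (exp (c * b n))"
    using ev[OF e(1)]
  proof eventually_elim
    case (elim n)
    then have "exp (c * (a - e)) \<le> exp (c * b n)" using c by (simp add: mult_left_mono)
    then have "y' < exp (c * b n)" using e(2) by linarith
    then show ?case using y' by (simp add: ennreal_less_iff)
  qed
qed

lemma ennreal_exp_sum_le_liminf:
  fixes a :: "'i \<Rightarrow> real" and b :: "'i \<Rightarrow> nat \<Rightarrow> real"
  assumes I: "finite I" and c: "c \<ge> 0" and b: "\<And>i n. i \<in> I \<Longrightarrow> b i n \<ge> 0"
    and le: "\<And>i. i \<in> I \<Longrightarrow> ennreal (a i) \<le> liminf (\<lambda>n. ennreal (b i n))"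
  shows "ennreal (exp (c * (\<Sum>i\<in>I. a i))) \<le> liminf (\<lambda>n. ennreal (exp (c * (\<Sum>i\<in>I. b i n))))"
proof (rule ennreal_exp_le_liminf[OF c])
  fix e :: real assume e: "e > 0"
  have "\<forall>\<^sub>F n in sequentially. \<forall>i\<in>I. a i - e / card I < b i n"
    using I e b le by (intro eventually_ball_finite ballI eventually_less_of_ennreal_le_liminf)
      (auto intro!: divide_pos_pos simp: card_gt_0_iff)
  then show "\<forall>\<^sub>F n in sequentially. (\<Sum>i\<in>I. a i) - e < (\<Sum>i\<in>I. b i n)"
  proof eventually_elim
    case (elim n)
    show ?case
    proof (cases "I = {}")
      case False
      then have "(\<Sum>i\<in>I. a i - e / card I) < (\<Sum>i\<in>I. b i n)"
        using I elim by (intro sum_strict_mono) auto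
      then show ?thesis using I False by (simp add: sum_subtractf)
    qed (use e in simp)
  qed
qed

lemma exp_sum_wiener_integral_le_liminf:
  assumes wp: "wiener_process M d W" and t: "t > 0" and c: "c \<ge> 0" and \<omega>: "\<omega> \<in> space M"
  shows "ennreal (exp (c * (\<Sum>i<d.
             (LINT s:{0..t}|lborel. \<bar>wiener_integral (\<lambda>r. 1 / (t - r)) (W i) s \<omega>\<bar>))))
           \<le> liminf (\<lambda>N. ennreal (exp (c * (\<Sum>i<d. bridge_riemann_sum (\<lambda>r. W i r \<omega>) t N))))"
proof -
  have "W i 0 \<omega> = 0 \<and> continuous_on {0..} (\<lambda>r. W i r \<omega>)" if "i < d" for i
    using wp that \<omega> unfolding wiener_process_def by blast
  then have "W i 0 \<omega> = 0" "continuous_on {0..t} (\<lambda>r. W i r \<omega>)" if "i < d" for i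
    using that continuous_on_subset[of "{0..}" "\<lambda>r. W i r \<omega>" "{0..t}"] by auto
  then show ?thesis
    using t c by (intro ennreal_exp_sum_le_liminf wiener_integral_abs_le_liminf)
      (auto simp: bridge_riemann_sum_def intro!: sum_nonneg)
qed

section \<open>The numerical bound\<close>

lemma exp_sub_one_le: "exp z - 1 \<le> exp z * (z :: real)"
proof -
  have "exp z * (1 - z) \<le> exp z * exp (- z)"
    using exp_ge_add_one_self[of "- z"] by (intro mult_left_mono) auto
  then show ?thesis by (simp add: exp_minus algebra_simps)
qed

lemma exp_mult_square_le:
  fixes a k x :: real
  assumes a: "0 \<le> a" "a \<le> 0.49" and k: "1.2 \<le> k" "k\<^sup>2 \<le> 1.6" and x: "0 \<le> x"
  shows "exp (a * x\<^sup>2) * (1 + k * x)\<^sup>2 \<le> 1 + 4 * k * x * exp (2 * x\<^sup>2)"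
proof -
  define u where "u = k * x"
  define E where "E = exp (a * x\<^sup>2)"
  have u: "0 \<le> u" using x k by (simp add: u_def)
  have E: "E \<ge> 1" using a x by (simp add: E_def)
  have "2.1 * x\<^sup>2 \<le> 2.4 * x + 7 * (x * x\<^sup>2)"
  proof -
    have "0 \<le> x * (7 * (x - 0.15)\<^sup>2 + 2.2425)" using x by simp
    then show ?thesis by (simp add: power2_eq_square algebra_simps)
  qed
  moreover have "2.4 * x \<le> 2 * u" using mult_right_mono[OF k(1) x] by (simp add: u_def)
  moreover have "7 \<le> 4 * (k * (2 - a))"
    using mult_mono[of "1.2" k "1.51" "2 - a"] k a by simp
  then have "7 * (x * x\<^sup>2) \<le> 4 * u * (2 - a) * x\<^sup>2"
    using x mult_right_mono[of 7 "4 * (k * (2 - a))" "x * x\<^sup>2"] by (simp add: u_def algebra_simps)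
  moreover have "(a + k\<^sup>2) * x\<^sup>2 \<le> 2.1 * x\<^sup>2" using a k by (intro mult_right_mono) auto
  ultimately have poly: "a * x\<^sup>2 + u\<^sup>2 \<le> 2 * u + 4 * u * ((2 - a) * x\<^sup>2)"
    by (simp add: u_def power_mult_distrib algebra_simps)
  have "E * (1 + u)\<^sup>2 = (E - 1) + 1 + E * (2 * u + u\<^sup>2)" by (simp add: power2_eq_square algebra_simps)
  also have "\<dots> \<le> 1 + E * (a * x\<^sup>2 + u\<^sup>2 + 2 * u)"
    using exp_sub_one_le[of "a * x\<^sup>2"] by (simp add: E_def algebra_simps)
  also have "\<dots> \<le> 1 + E * (4 * u * (1 + (2 - a) * x\<^sup>2))"
    using poly E by (intro add_left_mono mult_left_mono) (auto simp: algebra_simps)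
  also have "\<dots> \<le> 1 + E * (4 * u * exp ((2 - a) * x\<^sup>2))"
    using E u by (intro add_left_mono mult_left_mono exp_ge_add_one_self) auto
  also have "\<dots> = 1 + 4 * u * exp (2 * x\<^sup>2)"
    by (simp add: E_def algebra_simps flip: exp_add)
  finally show ?thesis by (simp add: E_def u_def)
qed

lemma abs_normal_mgf_bound_sq_le:
  fixes x :: real
  assumes x: "x \<ge> 0"
  shows "(abs_normal_mgf_bound (pi / 2 * x))\<^sup>2 \<le> exp (2 * x\<^sup>2) + 2 * sqrt (2 * pi) * x * exp (4 * x\<^sup>2)"
proof -
  define k where "k = sqrt (pi / 2)"
  define a where "a = pi\<^sup>2 / 4 - 2"
  have pi: "3.14 \<le> pi" "pi \<le> 3.15" using pi_approx by auto
  then have "3.14 * 3.14 \<le> pi * pi" "pi * pi \<le> 3.15 * 3.15"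
    using mult_mono[OF pi(1) pi(1)] mult_mono[OF pi(2) pi(2)] by auto
  then have a: "0 \<le> a" "a \<le> 0.49" by (auto simp: a_def power2_eq_square)
  have k: "1.2 \<le> k" "k\<^sup>2 \<le> 1.6"
    unfolding k_def using pi by (intro real_le_rsqrt, simp add: power2_eq_square, simp)
  have "sqrt (2 * pi) = sqrt 4 * k"
    unfolding k_def real_sqrt_mult[symmetric] by simp
  then have sqrt_2pi: "sqrt (2 * pi) = 2 * k" by simp
  have "pi / 2 * sqrt (2 / pi) = k"
    by (simp add: k_def real_sqrt_divide real_sqrt_mult field_simps)
  then have kx: "pi / 2 * x * sqrt (2 / pi) = k * x" by (simp add: algebra_simps)
  have exp_sq: "(exp ((pi / 2 * x)\<^sup>2 / 2))\<^sup>2 = exp (2 * x\<^sup>2) * exp (a * x\<^sup>2)"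
    by (simp add: a_def power_mult_distrib power_divide algebra_simps flip: exp_double exp_add)
  have "(abs_normal_mgf_bound (pi / 2 * x))\<^sup>2 = exp (2 * x\<^sup>2) * (exp (a * x\<^sup>2) * (1 + k * x)\<^sup>2)"
    unfolding abs_normal_mgf_bound_def kx power_mult_distrib[of "exp _"] exp_sq by (simp only: mult.assoc)
  also have "\<dots> \<le> exp (2 * x\<^sup>2) * (1 + 4 * k * x * exp (2 * x\<^sup>2))"
    using a k x by (intro mult_left_mono exp_mult_square_le) auto
  also have "\<dots> = exp (2 * x\<^sup>2) + 2 * sqrt (2 * pi) * x * exp (4 * x\<^sup>2)"
    unfolding sqrt_2pi by (simp add: algebra_simps flip: exp_add)
  finally show ?thesis .
qed

lemma abs_normal_mgf_bound_pow_le: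
  assumes t: "t > 0" and c: "c \<ge> 0"
  shows "abs_normal_mgf_bound (c * (pi / 2 * sqrt t)) ^ d
           \<le> (exp (2 * c\<^sup>2 * t) + 2 * c * sqrt (2 * pi * t) * exp (4 * c\<^sup>2 * t)) powr (real d / 2)"
proof -
  define K where "K = exp (2 * c\<^sup>2 * t) + 2 * c * sqrt (2 * pi * t) * exp (4 * c\<^sup>2 * t)"
  have K: "K > 0" unfolding K_def using c t by (intro add_pos_nonneg) auto
  have H: "abs_normal_mgf_bound (c * (pi / 2 * sqrt t)) \<ge> 0"
    using c t by (intro abs_normal_mgf_bound_nonneg) auto
  have "(abs_normal_mgf_bound (c * (pi / 2 * sqrt t)))\<^sup>2 \<le> K"
    using abs_normal_mgf_bound_sq_le[of "c * sqrt t"] c t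
    by (simp add: K_def power_mult_distrib real_sqrt_mult algebra_simps)
  then have "abs_normal_mgf_bound (c * (pi / 2 * sqrt t)) ^ d \<le> sqrt K ^ d"
    using H by (intro power_mono real_le_rsqrt) auto
  also have "sqrt K ^ d = K powr (real d / 2)"
    using K by (simp add: powr_half_sqrt[symmetric] powr_realpow[symmetric] powr_powr)
  finally show ?thesis by (simp add: K_def)
qed

theorem mainTheorem13:
  fixes M :: "'a measure" and d :: nat and W :: "nat \<Rightarrow> real \<Rightarrow> 'a \<Rightarrow> real"
    and t c :: real
  assumes "wiener_process M d W" and "t > 0" and "c \<ge> 0"
  shows "(\<integral>\<^sup>+\<omega>. ennreal (exp (c * (\<Sum>i<d.
              (LINT s:{0..t}|lborel. \<bar>wiener_integral (\<lambda>r. 1 / (t - r)) (W i) s \<omega>\<bar>)))) \<partial>M)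
         \<le> ennreal ((exp (2 * c^2 * t) + 2 * c * sqrt (2 * pi * t) * exp (4 * c^2 * t)) powr (real d / 2))
     \<and> (\<integral>\<^sup>+\<omega>. ennreal (exp (c * (\<Sum>i<d.
              (LINT s:{0..t}|lborel. \<bar>wiener_integral (\<lambda>r. 1 / (t - r)) (W i) s \<omega>\<bar>)))) \<partial>M) < \<infinity>"
proof -
  note wp = assms(1) and t = assms(2) and c = assms(3)
  let ?R = "\<lambda>N \<omega>. ennreal (exp (c * (\<Sum>i<d. bridge_riemann_sum (\<lambda>r. W i r \<omega>) t N)))"
  let ?K = "(exp (2 * c^2 * t) + 2 * c * sqrt (2 * pi * t) * exp (4 * c^2 * t)) powr (real d / 2)"
  have "(\<integral>\<^sup>+\<omega>. ennreal (exp (c * (\<Sum>i<d.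
              (LINT s:{0..t}|lborel. \<bar>wiener_integral (\<lambda>r. 1 / (t - r)) (W i) s \<omega>\<bar>)))) \<partial>M)
      \<le> (\<integral>\<^sup>+\<omega>. liminf (\<lambda>N. ?R N \<omega>) \<partial>M)"
    using wp t c by (intro nn_integral_mono exp_sum_wiener_integral_le_liminf)
  also have "\<dots> \<le> liminf (\<lambda>N. \<integral>\<^sup>+\<omega>. ?R N \<omega> \<partial>M)"
    using wp t by (intro nn_integral_liminf borel_measurable_exp_sum_bridge_riemann_sum) auto
  also have "\<dots> \<le> liminf (\<lambda>N. ennreal (abs_normal_mgf_bound (c * (pi / 2 * sqrt t)) ^ d))"
    using eventually_ge_at_top[of 2]
    by (intro Liminf_mono, eventually_elim) (rule nn_integral_exp_sum_bridge_riemann_sum_le[OF wp t c])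
  also have "\<dots> \<le> ennreal ?K"
    using abs_normal_mgf_bound_pow_le[OF t c, of d] by (simp add: ennreal_leI Liminf_const)
  finally have bound: "(\<integral>\<^sup>+\<omega>. ennreal (exp (c * (\<Sum>i<d.
              (LINT s:{0..t}|lborel. \<bar>wiener_integral (\<lambda>r. 1 / (t - r)) (W i) s \<omega>\<bar>)))) \<partial>M)
      \<le> ennreal ?K" .
  then show ?thesis using le_less_trans[OF bound ennreal_less_top] by simp
qed

end
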